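(* Let $J\subseteq\{1,\dots,n\}$ and for each pair $j<j'$ in $J$ let $t^+_{jj'},t^-_{jj'}$ be non-negative integers. Set $$\phi=\prod_{j,j'\in J,\ j<j'}(x_j-x_{j'})^{2t^+_{jj'}}(x_j+x_{j'})^{2t^-_{jj'}},\qquad \psi=\prod_{j,j'\in J,\ j<j'}(x_jx_{j'})^{t^+_{jj'}+t^-_{jj'}}.$$ Then for every nonzero homogeneous polynomial $R\in\mathbb{C}[x_1,\dots,x_n]$ there exists a monomial $x^K\in\mathrm{mon}(R)$ such that $\langle\phi\,x^K,\psi R\rangle\neq0$.
   Context: For $K\in\mathbb{N}^n$, $x^K=\prod_{i=1}^nx_i^{K(i)}$ and $K!=\prod_iK(i)!$; $\mathrm{coe}(x^K,f)$ is the coefficient of $x^K$ in $f$, and $\mathrm{mon}(f)$ is the set of monomials $x^K$ with $\mathrm{coe}(x^K,f)\ne0$. For homogeneous polynomials $f,g$ of the same degree $m$, $\langle f,g\rangle=\sum_{K\in\mathbb{N}^n,\ \sum_iK(i)=m}K!\,\mathrm{coe}(x^K,f)\overline{\mathrm{coe}(x^K,g)}$. *)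

theory Defs
  imports Complex_Main "HOL-Library.Poly_Mapping"
begin

text \<open>Multivariate complex polynomials in variables x_0, x_1, ... represented as finitely
supported maps from exponent vectors (monomials) to coefficients.\<close>

type_synonym monomial = "nat \<Rightarrow>\<^sub>0 nat"
type_synonym cpoly = "monomial \<Rightarrow>\<^sub>0 complex"

definition Var :: "nat \<Rightarrow> cpoly" where
  "Var i = Poly_Mapping.single (Poly_Mapping.single i 1) 1"

definition monom_poly :: "monomial \<Rightarrow> cpoly" where
  "monom_poly K = Poly_Mapping.single K 1"

definition coe :: "monomial \<Rightarrow> cpoly \<Rightarrow> complex" where
  "coe K f = Poly_Mapping.lookup f K"

definition mon :: "cpoly \<Rightarrow> monomial set" where
  "mon f = Poly_Mapping.keys f"

definition tdeg :: "monomial \<Rightarrow> nat" where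
  "tdeg K = (\<Sum>i\<in>Poly_Mapping.keys K. Poly_Mapping.lookup K i)"

definition mfact :: "monomial \<Rightarrow> nat" where
  "mfact K = (\<Prod>i\<in>Poly_Mapping.keys K. fact (Poly_Mapping.lookup K i))"

definition homogeneous :: "cpoly \<Rightarrow> bool" where
  "homogeneous f \<longleftrightarrow> (\<exists>m. \<forall>K\<in>mon f. tdeg K = m)"

definition in_vars :: "nat \<Rightarrow> cpoly \<Rightarrow> bool" where
  "in_vars n f \<longleftrightarrow> (\<forall>K\<in>mon f. Poly_Mapping.keys K \<subseteq> {1..n})"

text \<open>Only monomials in mon f \<union> mon g
contribute, so the sum is taken over this finite set (for homogeneous f, g of the same
degree m this is exactly the sum over all K of total degree m).\<close>
definition pinner :: "cpoly \<Rightarrow> cpoly \<Rightarrow> complex" where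
  "pinner f g = (\<Sum>K\<in>mon f \<union> mon g. of_nat (mfact K) * coe K f * cnj (coe K g))"

definition pairsJ :: "nat set \<Rightarrow> (nat \<times> nat) set" where
  "pairsJ J = {(j, j'). j \<in> J \<and> j' \<in> J \<and> j < j'}"

definition phi_poly :: "nat set \<Rightarrow> (nat \<Rightarrow> nat \<Rightarrow> nat) \<Rightarrow> (nat \<Rightarrow> nat \<Rightarrow> nat) \<Rightarrow> cpoly" where
  "phi_poly J tp tm = (\<Prod>(j, j')\<in>pairsJ J.
      (Var j - Var j') ^ (2 * tp j j') * (Var j + Var j') ^ (2 * tm j j'))"

definition psi_poly :: "nat set \<Rightarrow> (nat \<Rightarrow> nat \<Rightarrow> nat) \<Rightarrow> (nat \<Rightarrow> nat \<Rightarrow> nat) \<Rightarrow> cpoly" where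
  "psi_poly J tp tm = (\<Prod>(j, j')\<in>pairsJ J. (Var j * Var j') ^ (tp j j' + tm j j'))"

end

theory Submission
  imports Defs
begin

text \<open>Write G for the product of the factors (x_j - x_j')^t+ (x_j + x_j')^t-, so that
phi = G^2. Multiplication by a monomial preserves the plain coefficient pairing
[f, g] = sum_K coe(x^K, f) conj(coe(x^K, g)); hence [(x_j \<mp> x_j') f, x_j x_j' g] =
\<mp>[f, (x_j \<mp> x_j') g], and therefore [G f, psi g] = \<plusminus>[f, G g]. The factorials of the
pairing \<open>pinner\<close> can be absorbed into the coefficients of R, giving a polynomial R' with
the same support. If all pairings in the theorem vanished, then by linearity
0 = [phi R', psi R'] = \<plusminus>[G R', G R'], so G R' = 0, impossible in an integral domain.\<close>

definition coeff_inner :: "('m \<Rightarrow>\<^sub>0 complex) \<Rightarrow> ('m \<Rightarrow>\<^sub>0 complex) \<Rightarrow> complex" where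
  "coeff_inner f g =
     (\<Sum>M\<in>Poly_Mapping.keys f. Poly_Mapping.lookup f M * cnj (Poly_Mapping.lookup g M))"

lemma coeff_inner_zero_left [simp]: "coeff_inner 0 g = 0"
  by (simp add: coeff_inner_def)

lemma coeff_inner_eq_sum_superset:
  assumes "finite U" "Poly_Mapping.keys f \<subseteq> U"
  shows "coeff_inner f g = (\<Sum>M\<in>U. Poly_Mapping.lookup f M * cnj (Poly_Mapping.lookup g M))"
  unfolding coeff_inner_def
  by (rule sum.mono_neutral_left) (use assms in \<open>auto simp: in_keys_iff\<close>)

lemma coeff_inner_add_left: "coeff_inner (f + h) g = coeff_inner f g + coeff_inner h g"
proof -
  let ?U = "Poly_Mapping.keys f \<union> Poly_Mapping.keys h"
  have "Poly_Mapping.keys (f + h) \<subseteq> ?U" by (rule keys_add)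
  then show ?thesis
    by (simp add: coeff_inner_eq_sum_superset[of ?U] lookup_add distrib_right sum.distrib)
qed

lemma coeff_inner_diff_left: "coeff_inner (f - h) g = coeff_inner f g - coeff_inner h g"
proof -
  let ?U = "Poly_Mapping.keys f \<union> Poly_Mapping.keys h"
  have "Poly_Mapping.keys (f - h) \<subseteq> ?U" by (auto simp: in_keys_iff lookup_minus)
  then show ?thesis
    by (simp add: coeff_inner_eq_sum_superset[of ?U] lookup_minus left_diff_distrib sum_subtractf)
qed

lemma coeff_inner_add_right: "coeff_inner f (g + h) = coeff_inner f g + coeff_inner f h"
  by (simp add: coeff_inner_def lookup_add distrib_left sum.distrib)

lemma coeff_inner_diff_right: "coeff_inner f (g - h) = coeff_inner f g - coeff_inner f h"
  by (simp add: coeff_inner_def lookup_minus right_diff_distrib sum_subtractf)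

lemma coeff_inner_sum_left:
  "finite S \<Longrightarrow> coeff_inner (sum F S) g = (\<Sum>i\<in>S. coeff_inner (F i) g)"
  by (induction S rule: finite_induct) (simp_all add: coeff_inner_add_left)

lemma lookup_single_mult_add:
  fixes f :: "'m::cancel_comm_monoid_add \<Rightarrow>\<^sub>0 'a::comm_semiring_1"
  shows "Poly_Mapping.lookup (Poly_Mapping.single A c * f) (A + M) = c * Poly_Mapping.lookup f M"
  by (simp add: lookup_mult lookup_single mult_when when_mult Sum_any_when_equal)

lemma keys_single_mult:
  "Poly_Mapping.keys (Poly_Mapping.single A c * f) \<subseteq> (\<lambda>M. A + M) ` Poly_Mapping.keys f"
  using keys_mult[of "Poly_Mapping.single A c" f] by (auto split: if_splits)

lemma lookup_single_mult_notin:
  assumes "\<nexists>M. K = A + M"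
  shows "Poly_Mapping.lookup (Poly_Mapping.single A c * f) K = 0"
  using keys_single_mult[of A c f] assms by (auto simp: in_keys_iff)

lemma coeff_inner_const_mult_left:
  fixes f :: "'m::cancel_comm_monoid_add \<Rightarrow>\<^sub>0 complex"
  shows "coeff_inner (Poly_Mapping.single 0 c * f) g = c * coeff_inner f g"
proof -
  have "Poly_Mapping.keys (Poly_Mapping.single 0 c * f) \<subseteq> Poly_Mapping.keys f"
    using keys_single_mult[of 0 c f] by simp
  then have "coeff_inner (Poly_Mapping.single 0 c * f) g = (\<Sum>M\<in>Poly_Mapping.keys f.
      Poly_Mapping.lookup (Poly_Mapping.single 0 c * f) M * cnj (Poly_Mapping.lookup g M))"
    by (rule coeff_inner_eq_sum_superset[OF finite_keys])
  then show ?thesis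
    using lookup_single_mult_add[of 0 c f]
    by (simp add: coeff_inner_def sum_distrib_left mult.assoc)
qed

lemma coeff_inner_single_mult:
  fixes f g :: "'m::cancel_comm_monoid_add \<Rightarrow>\<^sub>0 complex"
  shows "coeff_inner (Poly_Mapping.single A 1 * f) (Poly_Mapping.single A 1 * g) = coeff_inner f g"
proof -
  let ?A = "Poly_Mapping.single A (1::complex)"
  have "coeff_inner (?A * f) (?A * g) = (\<Sum>M\<in>(\<lambda>M. A + M) ` Poly_Mapping.keys f.
          Poly_Mapping.lookup (?A * f) M * cnj (Poly_Mapping.lookup (?A * g) M))"
    by (rule coeff_inner_eq_sum_superset) (use keys_single_mult[of A 1 f] in auto)
  also have "\<dots> = (\<Sum>M\<in>Poly_Mapping.keys f.
          Poly_Mapping.lookup (?A * f) (A + M) * cnj (Poly_Mapping.lookup (?A * g) (A + M)))"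
    by (subst sum.reindex) (auto simp: inj_on_def)
  also have "\<dots> = coeff_inner f g" by (simp add: lookup_single_mult_add coeff_inner_def)
  finally show ?thesis .
qed

lemma coeff_inner_self_eq_0_iff: "coeff_inner h h = 0 \<longleftrightarrow> h = 0"
proof
  assume "coeff_inner h h = 0"
  moreover have "coeff_inner h h =
      of_real (\<Sum>M\<in>Poly_Mapping.keys h. (cmod (Poly_Mapping.lookup h M))\<^sup>2)"
    unfolding coeff_inner_def of_real_sum by (rule sum.cong) (simp_all only: complex_norm_square)
  ultimately have "(\<Sum>M\<in>Poly_Mapping.keys h. (cmod (Poly_Mapping.lookup h M))\<^sup>2) = 0"
    by (simp only: of_real_eq_0_iff)
  then have "\<forall>M\<in>Poly_Mapping.keys h. (cmod (Poly_Mapping.lookup h M))\<^sup>2 = 0"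
    by (subst (asm) sum_nonneg_eq_0_iff) auto
  then show "h = 0"
    by (intro poly_mapping_eqI) (metis in_keys_iff lookup_zero norm_eq_zero zero_eq_power2)
qed simp

lemma sum_single_lookup: "(\<Sum>K\<in>Poly_Mapping.keys h. Poly_Mapping.single K (Poly_Mapping.lookup h K)) = h"
  by (rule poly_mapping_eqI)
     (simp add: lookup_sum lookup_single when_def in_keys_iff sum.delta[OF finite_keys])

lemma coeff_inner_mult_left_expand:
  fixes f h :: "'m::cancel_comm_monoid_add \<Rightarrow>\<^sub>0 complex"
  shows "coeff_inner (f * h) g =
    (\<Sum>K\<in>Poly_Mapping.keys h. Poly_Mapping.lookup h K * coeff_inner (f * Poly_Mapping.single K 1) g)"
proof -
  have "f * h = (\<Sum>K\<in>Poly_Mapping.keys h.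
      Poly_Mapping.single 0 (Poly_Mapping.lookup h K) * (f * Poly_Mapping.single K 1))"
    by (subst sum_single_lookup[symmetric, of h])
       (simp add: sum_distrib_left mult_single mult.left_commute)
  then show ?thesis by (simp add: coeff_inner_sum_left coeff_inner_const_mult_left)
qed

definition twisted_selfadjoint ::
  "('m::monoid_add \<Rightarrow>\<^sub>0 complex) \<Rightarrow> ('m \<Rightarrow>\<^sub>0 complex) \<Rightarrow> complex \<Rightarrow> bool" where
  "twisted_selfadjoint l m s \<longleftrightarrow> (\<forall>f g. coeff_inner (l * f) (m * g) = s * coeff_inner f (l * g))"

lemma twisted_selfadjoint_one: "twisted_selfadjoint 1 1 1"
  by (simp add: twisted_selfadjoint_def)

lemma twisted_selfadjoint_mult:
  fixes l1 l2 m1 m2 :: "'m::comm_monoid_add \<Rightarrow>\<^sub>0 complex"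
  assumes "twisted_selfadjoint l1 m1 s1" "twisted_selfadjoint l2 m2 s2"
  shows "twisted_selfadjoint (l1 * l2) (m1 * m2) (s1 * s2)"
  unfolding twisted_selfadjoint_def
proof (intro allI)
  fix f g
  have "coeff_inner (l1 * l2 * f) (m1 * m2 * g) = coeff_inner (l1 * (l2 * f)) (m1 * (m2 * g))"
    by (simp add: ac_simps)
  also have "\<dots> = s1 * coeff_inner (l2 * f) (m2 * (l1 * g))"
    using assms(1) unfolding twisted_selfadjoint_def by (metis mult.left_commute)
  also have "\<dots> = s1 * s2 * coeff_inner f (l1 * l2 * g)"
    using assms(2) unfolding twisted_selfadjoint_def by (metis mult.assoc mult.commute)
  finally show "coeff_inner (l1 * l2 * f) (m1 * m2 * g) = s1 * s2 * coeff_inner f (l1 * l2 * g)" .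
qed

lemma twisted_selfadjoint_power:
  fixes l m :: "'m::comm_monoid_add \<Rightarrow>\<^sub>0 complex"
  shows "twisted_selfadjoint l m s \<Longrightarrow> twisted_selfadjoint (l ^ k) (m ^ k) (s ^ k)"
  by (induction k) (simp_all add: twisted_selfadjoint_one twisted_selfadjoint_mult)

lemma twisted_selfadjoint_prod:
  fixes l m :: "'i \<Rightarrow> 'm::comm_monoid_add \<Rightarrow>\<^sub>0 complex"
  assumes "\<And>p. p \<in> S \<Longrightarrow> twisted_selfadjoint (l p) (m p) (s p)"
  shows "twisted_selfadjoint (prod l S) (prod m S) (prod s S)"
proof (cases "finite S")
  case True
  then show ?thesis using assms
    by (induction S rule: finite_induct) (simp_all add: twisted_selfadjoint_one twisted_selfadjoint_mult)
qed (simp add: twisted_selfadjoint_one)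

lemma twisted_selfadjoint_single_diff:
  fixes A B :: "'m::cancel_comm_monoid_add"
  defines "a \<equiv> Poly_Mapping.single A (1::complex)" and "b \<equiv> Poly_Mapping.single B (1::complex)"
  shows "twisted_selfadjoint (a - b) (a * b) (-1)"
  unfolding twisted_selfadjoint_def
proof (intro allI)
  fix f g
  have "coeff_inner ((a - b) * f) (a * b * g) =
      coeff_inner (a * f) (a * (b * g)) - coeff_inner (b * f) (b * (a * g))"
    by (simp add: left_diff_distrib coeff_inner_diff_left mult.assoc mult.left_commute[of a b])
  also have "\<dots> = coeff_inner f (b * g) - coeff_inner f (a * g)"
    by (simp add: a_def b_def coeff_inner_single_mult)
  also have "\<dots> = -1 * coeff_inner f ((a - b) * g)"
    by (simp add: left_diff_distrib coeff_inner_diff_right)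
  finally show "coeff_inner ((a - b) * f) (a * b * g) = -1 * coeff_inner f ((a - b) * g)" .
qed

lemma twisted_selfadjoint_single_add:
  fixes A B :: "'m::cancel_comm_monoid_add"
  defines "a \<equiv> Poly_Mapping.single A (1::complex)" and "b \<equiv> Poly_Mapping.single B (1::complex)"
  shows "twisted_selfadjoint (a + b) (a * b) 1"
  unfolding twisted_selfadjoint_def
proof (intro allI)
  fix f g
  have "coeff_inner ((a + b) * f) (a * b * g) =
      coeff_inner (a * f) (a * (b * g)) + coeff_inner (b * f) (b * (a * g))"
    by (simp add: distrib_right coeff_inner_add_left mult.assoc mult.left_commute[of a b])
  also have "\<dots> = coeff_inner f (b * g) + coeff_inner f (a * g)"
    by (simp add: a_def b_def coeff_inner_single_mult)
  also have "\<dots> = 1 * coeff_inner f ((a + b) * g)"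
    by (simp add: distrib_right coeff_inner_add_right)
  finally show "coeff_inner ((a + b) * f) (a * b * g) = 1 * coeff_inner f ((a + b) * g)" .
qed

definition fact_weighted :: "monomial \<Rightarrow> cpoly \<Rightarrow> cpoly" where
  "fact_weighted P R = Poly_Mapping.mapp (\<lambda>K c. of_nat (mfact (P + K)) * c) R"

lemma mfact_pos: "mfact K > 0"
  unfolding mfact_def by (rule prod_pos) auto

lemma lookup_fact_weighted:
  "Poly_Mapping.lookup (fact_weighted P R) K = of_nat (mfact (P + K)) * Poly_Mapping.lookup R K"
  by (simp add: fact_weighted_def lookup_mapp when_def in_keys_iff)

lemma keys_fact_weighted: "Poly_Mapping.keys (fact_weighted P R) = Poly_Mapping.keys R"
  using mfact_pos by (auto simp: in_keys_iff lookup_fact_weighted)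

lemma fact_weighted_eq_0_iff: "fact_weighted P R = 0 \<longleftrightarrow> R = 0"
  by (simp only: keys_eq_empty[symmetric] keys_fact_weighted)

lemma pinner_monom_poly_mult_right:
  "pinner f (monom_poly P * R) = coeff_inner f (monom_poly P * fact_weighted P R)"
proof -
  let ?U = "mon f \<union> mon (monom_poly P * R)"
  have "coeff_inner f (monom_poly P * fact_weighted P R) = (\<Sum>K\<in>?U.
      Poly_Mapping.lookup f K * cnj (Poly_Mapping.lookup (monom_poly P * fact_weighted P R) K))"
    by (rule coeff_inner_eq_sum_superset) (auto simp: mon_def)
  also have "\<dots> = (\<Sum>K\<in>?U. of_nat (mfact K) * coe K f * cnj (coe K (monom_poly P * R)))"
  proof (rule sum.cong[OF refl])
    fix K
    show "Poly_Mapping.lookup f K * cnj (Poly_Mapping.lookup (monom_poly P * fact_weighted P R) K) =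
        of_nat (mfact K) * coe K f * cnj (coe K (monom_poly P * R))"
    proof (cases "\<exists>M. K = P + M")
      case True
      then obtain M where "K = P + M" by blast
      then show ?thesis
        by (simp add: monom_poly_def coe_def lookup_single_mult_add lookup_fact_weighted)
    qed (simp add: monom_poly_def coe_def lookup_single_mult_notin)
  qed
  finally show ?thesis unfolding pinner_def by simp
qed

lemma exists_monom_pinner_nonzero:
  assumes "twisted_selfadjoint G (monom_poly P) s" "s \<noteq> 0" "G \<noteq> 0" "R \<noteq> 0"
  shows "\<exists>K\<in>mon R. pinner (G ^ 2 * monom_poly K) (monom_poly P * R) \<noteq> 0"
proof (rule ccontr)
  assume "\<not> ?thesis"
  then have vanish: "coeff_inner (G ^ 2 * monom_poly K) (monom_poly P * fact_weighted P R) = 0"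
    if "K \<in> Poly_Mapping.keys R" for K
    using that by (auto simp: mon_def pinner_monom_poly_mult_right)
  define R' where "R' = fact_weighted P R"
  have "R' \<noteq> 0"
    using assms(4) unfolding R'_def by (simp add: fact_weighted_eq_0_iff)
  have "s * coeff_inner (G * R') (G * R') = coeff_inner (G ^ 2 * R') (monom_poly P * R')"
    using assms(1) unfolding twisted_selfadjoint_def power2_eq_square mult.assoc by simp
  also have "\<dots> = (\<Sum>K\<in>Poly_Mapping.keys R'.
      Poly_Mapping.lookup R' K * coeff_inner (G ^ 2 * monom_poly K) (monom_poly P * R'))"
    unfolding monom_poly_def by (rule coeff_inner_mult_left_expand)
  also have "\<dots> = 0"
    using vanish by (simp add: R'_def keys_fact_weighted)
  finally have "coeff_inner (G * R') (G * R') = 0"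
    using assms(2) by simp
  then have "G * R' = 0"
    by (simp add: coeff_inner_self_eq_0_iff)
  with \<open>G \<noteq> 0\<close> \<open>R' \<noteq> 0\<close> show False by simp
qed

lemma monom_poly_mult: "monom_poly A * monom_poly B = monom_poly (A + B)"
  by (simp add: monom_poly_def mult_single)

lemma monom_poly_power: "monom_poly A ^ k = monom_poly (\<Sum>i<k. A)"
  by (induction k) (simp_all add: monom_poly_def mult_single distrib_right)

lemma monom_poly_prod: "(\<Prod>p\<in>S. monom_poly (a p)) = monom_poly (\<Sum>p\<in>S. a p)"
proof (cases "finite S")
  case True
  then show ?thesis
    by (induction S rule: finite_induct) (simp_all add: monom_poly_mult, simp add: monom_poly_def)
qed (simp add: monom_poly_def)

lemma Var_mult_Var: "Var j * Var j' = monom_poly (Poly_Mapping.single j 1 + Poly_Mapping.single j' 1)"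
  by (simp add: Var_def monom_poly_def mult_single)

lemma psi_poly_eq_monom_poly:
  "psi_poly J tp tm = monom_poly (\<Sum>(j, j')\<in>pairsJ J.
      \<Sum>i<tp j j' + tm j j'. Poly_Mapping.single j 1 + Poly_Mapping.single j' 1)"
  unfolding psi_poly_def Var_mult_Var monom_poly_power case_prod_beta monom_poly_prod ..

lemma Var_eq_iff: "Var j = Var j' \<longleftrightarrow> j = j'"
  by (metis Var_def lookup_single_eq lookup_single_not_eq one_neq_zero)

lemma Var_add_nonzero: "Var j + Var j' \<noteq> 0"
proof
  assume "Var j + Var j' = 0"
  then have "Poly_Mapping.lookup (Var j + Var j') (Poly_Mapping.single j 1) = 0" by simp
  then show False
    by (simp add: Var_def lookup_add lookup_single when_def split: if_splits)
qed

definition phi_root :: "nat set \<Rightarrow> (nat \<Rightarrow> nat \<Rightarrow> nat) \<Rightarrow> (nat \<Rightarrow> nat \<Rightarrow> nat) \<Rightarrow> cpoly" where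
  "phi_root J tp tm = (\<Prod>(j, j')\<in>pairsJ J. (Var j - Var j') ^ tp j j' * (Var j + Var j') ^ tm j j')"

lemma phi_poly_eq_phi_root_square: "phi_poly J tp tm = phi_root J tp tm ^ 2"
  unfolding phi_poly_def phi_root_def prod_power_distrib
  by (rule prod.cong) (auto simp: power_mult power_mult_distrib mult.commute[of 2])

lemma phi_root_nonzero: "phi_root J tp tm \<noteq> 0"
proof (cases "finite (pairsJ J)")
  case True
  then show ?thesis
    by (auto simp: phi_root_def prod_zero_iff pairsJ_def Var_eq_iff Var_add_nonzero)
qed (simp add: phi_root_def)

lemma twisted_selfadjoint_phi_root:
  "twisted_selfadjoint (phi_root J tp tm) (psi_poly J tp tm) ((-1) ^ (\<Sum>(j, j')\<in>pairsJ J. tp j j'))"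
proof -
  have "twisted_selfadjoint ((Var j - Var j') ^ tp j j' * (Var j + Var j') ^ tm j j')
      ((Var j * Var j') ^ tp j j' * (Var j * Var j') ^ tm j j') ((-1) ^ tp j j' * 1 ^ tm j j')"
    for j j'
    unfolding Var_def
    by (intro twisted_selfadjoint_mult twisted_selfadjoint_power
        twisted_selfadjoint_single_diff twisted_selfadjoint_single_add)
  then have "twisted_selfadjoint ((Var j - Var j') ^ tp j j' * (Var j + Var j') ^ tm j j')
      ((Var j * Var j') ^ (tp j j' + tm j j')) ((-1) ^ tp j j')" for j j'
    by (simp add: power_add)
  then show ?thesis
    unfolding phi_root_def psi_poly_def power_sum
    by (intro twisted_selfadjoint_prod) auto
qed

theorem lemma6p2:
  fixes n :: nat and J :: "nat set" and tp tm :: "nat \<Rightarrow> nat \<Rightarrow> nat" and R :: cpoly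
  assumes "J \<subseteq> {1..n}"
    and "in_vars n R" and "R \<noteq> 0" and "homogeneous R"
  shows "\<exists>K\<in>mon R. pinner (phi_poly J tp tm * monom_poly K) (psi_poly J tp tm * R) \<noteq> 0"
  \<comment> \<open>only \<open>R \<noteq> 0\<close> is needed; the argument works for arbitrary J and arbitrary R\<close>
  using exists_monom_pinner_nonzero[OF _ _ phi_root_nonzero \<open>R \<noteq> 0\<close>]
    twisted_selfadjoint_phi_root[of J tp tm]
  unfolding psi_poly_eq_monom_poly phi_poly_eq_phi_root_square
  by simp

end
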